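(* Let $\Lambda=B(\mathbb Z^2)\subset\mathbb R^2$ be a Bravais lattice and let $f\colon\mathbb R\to\mathbb R$ be a non-negative, compactly supported function with $f(0)=0$ and $\sum_{u\in\Lambda\setminus\{0\}} f(\|u\|^2)<\infty$. Then, in the strong operator topology on bounded operators on $\ell^2(\Lambda)$, $W_f^N\to W_f$ and $L_f^N\to L_f$ as $N\to\infty$ through even integers.
   Context: The operator $W_f$ on $\ell^2(\Lambda)$ is $(W_f\psi)(v)=\sum_{u\in\Lambda,\,u\ne v} f(\|u-v\|^2)\psi(u)$, and $L_f=\big(\sum_{u\in\Lambda\setminus\{0\}}f(\|u\|^2)\big)\mathrm{Id}-W_f$. For an even integer $N$, let $\Lambda^N=\{B(i-N/2,\ j-N/2)^t: i,j\in\{0,1,\dots,N-1\}\}\subset\Lambda$ (an $N^2$-point truncation of $\Lambda$), and let $d$ denote the distance on $\Lambda^N$ after periodic identification of the boundaries, i.e. the distance in the torus $\mathbb R^2/B(N\mathbb Z^2)$. Define $W_f^N$ on $\ell^2(\Lambda^N)$ by $(W_f^N\psi)(v)=\sum_{u\in\Lambda^N,\,u\ne v} f(d^2(u,v))\psi(u)$, and $L_f^N$ by $(L_f^N\psi)(v)=\big[\sum_{u\in\Lambda^N\setminus\{0\}} f(d^2(u,0))\big]\psi(v)-(W_f^N\psi)(v)$ for $v\in\Lambda^N$. Both are extended to operators on $\ell^2(\Lambda)$ by applying them to the restriction of $\psi$ to $\Lambda^N$ and setting the output to $0$ at points $v\notin\Lambda^N$. *)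

theory Defs
  imports "HOL-Analysis.Analysis"
begin

text \<open>Lattice points are indexed by their integer coordinates k in Z^2; the point is B k.
  Since B is invertible, l2(Lambda) is identified with functions on int * int.\<close>

definition lat :: "real^2^2 \<Rightarrow> int \<times> int \<Rightarrow> real^2" where
  "lat B k = B *v vector [real_of_int (fst k), real_of_int (snd k)]"

text \<open>Truncation Lambda^N: coordinates i - N/2, j - N/2 with i, j in {0..N-1} (N even).\<close>
definition trunc :: "nat \<Rightarrow> (int \<times> int) set" where
  "trunc N = {- (int N div 2) ..< int N - int N div 2} \<times> {- (int N div 2) ..< int N - int N div 2}"

definition tdist :: "real^2^2 \<Rightarrow> nat \<Rightarrow> real^2 \<Rightarrow> real^2 \<Rightarrow> real" where
  "tdist B N x y = Inf {norm (x - y - lat B (int N * a, int N * b)) | a b. True}"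

definition in_l2 :: "(int \<times> int \<Rightarrow> complex) \<Rightarrow> bool" where
  "in_l2 \<psi> \<longleftrightarrow> (\<lambda>v. (norm (\<psi> v))\<^sup>2) summable_on UNIV"

definition Wf :: "(real \<Rightarrow> real) \<Rightarrow> real^2^2 \<Rightarrow> (int \<times> int \<Rightarrow> complex) \<Rightarrow> int \<times> int \<Rightarrow> complex" where
  "Wf f B \<psi> v = (\<Sum>\<^sub>\<infinity>u\<in>UNIV - {v}. of_real (f ((norm (lat B u - lat B v))\<^sup>2)) * \<psi> u)"

definition Lf :: "(real \<Rightarrow> real) \<Rightarrow> real^2^2 \<Rightarrow> (int \<times> int \<Rightarrow> complex) \<Rightarrow> int \<times> int \<Rightarrow> complex" where
  "Lf f B \<psi> v = of_real (\<Sum>\<^sub>\<infinity>u\<in>UNIV - {(0,0)}. f ((norm (lat B u))\<^sup>2)) * \<psi> v - Wf f B \<psi> v"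

definition WfN :: "(real \<Rightarrow> real) \<Rightarrow> real^2^2 \<Rightarrow> nat \<Rightarrow> (int \<times> int \<Rightarrow> complex) \<Rightarrow> int \<times> int \<Rightarrow> complex" where
  "WfN f B N \<psi> v = (if v \<in> trunc N then
     (\<Sum>u\<in>trunc N - {v}. of_real (f ((tdist B N (lat B u) (lat B v))\<^sup>2)) * \<psi> u) else 0)"

definition LfN :: "(real \<Rightarrow> real) \<Rightarrow> real^2^2 \<Rightarrow> nat \<Rightarrow> (int \<times> int \<Rightarrow> complex) \<Rightarrow> int \<times> int \<Rightarrow> complex" where
  "LfN f B N \<psi> v = (if v \<in> trunc N then
     of_real (\<Sum>u\<in>trunc N - {(0,0)}. f ((tdist B N (lat B u) (lat B (0,0)))\<^sup>2)) * \<psi> v - WfN f B N \<psi> v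
     else 0)"

definition strong_conv_even ::
  "(nat \<Rightarrow> (int \<times> int \<Rightarrow> complex) \<Rightarrow> int \<times> int \<Rightarrow> complex) \<Rightarrow>
   ((int \<times> int \<Rightarrow> complex) \<Rightarrow> int \<times> int \<Rightarrow> complex) \<Rightarrow> bool" where
  "strong_conv_even T S \<longleftrightarrow> (\<forall>\<psi>. in_l2 \<psi> \<longrightarrow>
     (\<forall>\<^sub>F n in sequentially. in_l2 (\<lambda>v. T (2*n) \<psi> v - S \<psi> v)) \<and>
     (\<lambda>n. \<Sum>\<^sub>\<infinity>v. (norm (T (2*n) \<psi> v - S \<psi> v))\<^sup>2) \<longlonglongrightarrow> 0)"

end

theory Submission
  imports Defs
begin

text \<open>Since f has compact support, the kernel f (norm (B d)^2) vanishes unless the displacement d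
  lies in a fixed finite box. Once N is large, a torus displacement whose kernel is nonzero has a
  unique representative in that box, and it realises the torus distance. Hence W_f^N psi and
  W_f psi agree at every point of the truncation farther than the box radius from its boundary,
  and the diagonal constants of L_f^N and L_f coincide. Near the boundary both operators only see
  psi on a bounded number of translates of the box, all lying outside a slightly smaller centered
  square; so the squared l2 error is at most a constant times the l2 mass of psi outside that
  square, which tends to 0.\<close>

section \<open>Square-summable functions and strong convergence\<close>

lemma has_sum_sum:
  fixes h :: "'i \<Rightarrow> 'a \<Rightarrow> 'b::topological_comm_monoid_add"
  assumes "finite I" and "\<And>i. i \<in> I \<Longrightarrow> (h i has_sum s i) A"
  shows "((\<lambda>x. \<Sum>i\<in>I. h i x) has_sum (\<Sum>i\<in>I. s i)) A"
  using assms by (induction I rule: finite_induct) (auto intro!: has_sum_add)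

lemma has_sum_translate:
  fixes h :: "'a::group_add \<Rightarrow> 'b::topological_comm_monoid_add"
  shows "((\<lambda>v. h (v + s)) has_sum a) UNIV \<longleftrightarrow> (h has_sum a) UNIV"
proof -
  have "bij_betw (\<lambda>v. v + s) UNIV UNIV"
    by (rule bij_betwI[where g = "\<lambda>v. v - s"]) auto
  then show ?thesis by (rule has_sum_reindex_bij_betw)
qed

lemma square_summable_dominated_by_translates:
  fixes \<phi> X :: "'a::ab_group_add \<Rightarrow> 'b::real_normed_vector"
  assumes \<phi>: "((\<lambda>v. (norm (\<phi> v))\<^sup>2) has_sum a) UNIV" and S: "finite S" and G: "G \<ge> 0"
    and dom: "\<And>v. norm (X v) \<le> G * (\<Sum>s\<in>S. norm (\<phi> (v + s)))"
  shows "(\<lambda>v. (norm (X v))\<^sup>2) summable_on UNIV"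
    and "(\<Sum>\<^sub>\<infinity>v. (norm (X v))\<^sup>2) \<le> (G * card S)\<^sup>2 * a"
proof -
  let ?g = "\<lambda>v. G\<^sup>2 * card S * (\<Sum>s\<in>S. (norm (\<phi> (v + s)))\<^sup>2)"
  have sum_g: "(?g has_sum G\<^sup>2 * card S * (\<Sum>s\<in>S. a)) UNIV"
    by (intro has_sum_cmult_right has_sum_sum S) (rule has_sum_translate[THEN iffD2, OF \<phi>])
  have "G\<^sup>2 * card S * (\<Sum>s\<in>S. a) = (G * card S)\<^sup>2 * a"
    by (simp add: power2_eq_square)
  with sum_g have g: "(?g has_sum (G * card S)\<^sup>2 * a) UNIV" by (simp only:)
  have dom2: "(norm (X v))\<^sup>2 \<le> ?g v" for v
  proof -
    have "(norm (X v))\<^sup>2 \<le> (G * (\<Sum>s\<in>S. norm (\<phi> (v + s))))\<^sup>2"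
      by (rule power_mono[OF dom norm_ge_zero])
    also have "\<dots> = G\<^sup>2 * (\<Sum>s\<in>S. norm (\<phi> (v + s)))\<^sup>2"
      by (rule power_mult_distrib)
    also have "\<dots> \<le> G\<^sup>2 * ((\<Sum>s\<in>S. (norm (\<phi> (v + s)))\<^sup>2) * card S)"
      by (rule mult_left_mono[OF sum_squared_le_sum_of_squares zero_le_power2])
    finally show ?thesis by (simp only: mult_ac)
  qed
  show X: "(\<lambda>v. (norm (X v))\<^sup>2) summable_on UNIV"
    by (rule summable_on_comparison_test[OF has_sum_imp_summable[OF g] dom2 zero_le_power2])
  show "(\<Sum>\<^sub>\<infinity>v. (norm (X v))\<^sup>2) \<le> (G * card S)\<^sup>2 * a"
    using has_sum_mono[OF has_sum_infsum[OF X] g dom2] .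
qed

lemma infsum_outside_tendsto_0:
  fixes h :: "'a \<Rightarrow> real"
  assumes h: "h summable_on UNIV" and fin: "\<And>n. finite (C n)"
    and C: "filterlim C (finite_subsets_at_top UNIV) sequentially"
  shows "(\<lambda>n. \<Sum>\<^sub>\<infinity>v\<in>UNIV - C n. h v) \<longlonglongrightarrow> 0"
proof -
  have "(\<lambda>n. sum h (C n)) \<longlonglongrightarrow> (\<Sum>\<^sub>\<infinity>v. h v)"
    using filterlim_compose[OF infsum_tendsto[OF h] C] by (simp add: o_def)
  from tendsto_diff[OF tendsto_const[of "\<Sum>\<^sub>\<infinity>v. h v"] this]
  have "(\<lambda>n. (\<Sum>\<^sub>\<infinity>v. h v) - sum h (C n)) \<longlonglongrightarrow> 0" by simp
  moreover have "(\<Sum>\<^sub>\<infinity>v\<in>UNIV - C n. h v) = (\<Sum>\<^sub>\<infinity>v. h v) - sum h (C n)" for n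
    using infsum_Diff[OF h, of "C n"] fin by simp
  ultimately show ?thesis by simp
qed

lemma centered_squares_tendsto_finite_subsets:
  fixes k :: int
  shows "filterlim (\<lambda>n. {- int n + k ..< int n - k} \<times> {- int n + k ..< int n - k})
           (finite_subsets_at_top UNIV) sequentially"
  unfolding filterlim_finite_subsets_at_top
proof (intro allI impI)
  fix X :: "(int \<times> int) set" assume "finite X \<and> X \<subseteq> UNIV"
  then have "finite ((\<lambda>x. max \<bar>fst x\<bar> \<bar>snd x\<bar>) ` X)" by simp
  then obtain m where m: "\<And>x. x \<in> X \<Longrightarrow> \<bar>fst x\<bar> \<le> m \<and> \<bar>snd x\<bar> \<le> m"
    by (metis (no_types, lifting) Max_ge image_eqI max.bounded_iff)
  show "\<forall>\<^sub>F n in sequentially. finite ({- int n + k ..< int n - k} \<times> {- int n + k ..< int n - k}) \<and>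
      X \<subseteq> {- int n + k ..< int n - k} \<times> {- int n + k ..< int n - k} \<and>
      {- int n + k ..< int n - k} \<times> {- int n + k ..< int n - k} \<subseteq> UNIV"
    unfolding eventually_sequentially
  proof (intro exI[of _ "nat (m + \<bar>k\<bar> + 1)"] allI impI conjI)
    fix n assume n: "nat (m + \<bar>k\<bar> + 1) \<le> n"
    show "X \<subseteq> {- int n + k ..< int n - k} \<times> {- int n + k ..< int n - k}"
    proof
      fix x assume "x \<in> X"
      then have "\<bar>fst x\<bar> \<le> m \<and> \<bar>snd x\<bar> \<le> m" by (rule m)
      then show "x \<in> {- int n + k ..< int n - k} \<times> {- int n + k ..< int n - k}"
        using n by (cases x) auto
    qed
  qed auto
qed

definition vanish_on :: "'a set \<Rightarrow> ('a \<Rightarrow> 'b::zero) \<Rightarrow> 'a \<Rightarrow> 'b" where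
  "vanish_on C \<psi> v = (if v \<in> C then 0 else \<psi> v)"

lemma strong_conv_evenI:
  fixes T :: "nat \<Rightarrow> (int \<times> int \<Rightarrow> complex) \<Rightarrow> int \<times> int \<Rightarrow> complex"
    and U :: "(int \<times> int \<Rightarrow> complex) \<Rightarrow> int \<times> int \<Rightarrow> complex"
  assumes K: "K \<ge> 0" and S: "\<And>n. finite (S n)" "\<And>n. card (S n) \<le> m"
    and C: "\<And>n. finite (C n)" "filterlim C (finite_subsets_at_top UNIV) sequentially"
    and dom: "\<forall>\<^sub>F n in sequentially. \<forall>\<psi> v.
      norm (T (2*n) \<psi> v - U \<psi> v) \<le> K * (\<Sum>s\<in>S n. norm (vanish_on (C n) \<psi> (v + s)))"
  shows "strong_conv_even T U"
  unfolding strong_conv_even_def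
proof (intro allI impI conjI)
  fix \<psi> assume "in_l2 \<psi>"
  then have \<psi>: "(\<lambda>v. (norm (\<psi> v))\<^sup>2) summable_on UNIV" by (simp add: in_l2_def)
  define t where "t n = (\<Sum>\<^sub>\<infinity>v\<in>UNIV - C n. (norm (\<psi> v))\<^sup>2)" for n
  have t: "((\<lambda>v. (norm (vanish_on (C n) \<psi> v))\<^sup>2) has_sum t n) UNIV" for n
  proof -
    have "((\<lambda>v. (norm (\<psi> v))\<^sup>2) has_sum t n) (UNIV - C n)"
      unfolding t_def by (intro has_sum_infsum summable_on_subset_banach[OF \<psi>]) simp
    then show ?thesis
      by (subst (asm) has_sum_cong_neutral[where T = UNIV]) (auto simp: vanish_on_def)
  qed
  have bound: "in_l2 (\<lambda>v. T (2*n) \<psi> v - U \<psi> v) \<and>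
      (\<Sum>\<^sub>\<infinity>v. (norm (T (2*n) \<psi> v - U \<psi> v))\<^sup>2) \<le> (K * m)\<^sup>2 * t n"
    if "\<forall>\<psi> v. norm (T (2*n) \<psi> v - U \<psi> v) \<le> K * (\<Sum>s\<in>S n. norm (vanish_on (C n) \<psi> (v + s)))"
    for n
  proof -
    have dom_n: "norm (T (2*n) \<psi> v - U \<psi> v) \<le> K * (\<Sum>s\<in>S n. norm (vanish_on (C n) \<psi> (v + s)))"
      for v using that by (rule spec2)
    note sq = square_summable_dominated_by_translates[OF t S(1) K dom_n]
    have "(K * card (S n))\<^sup>2 \<le> (K * m)\<^sup>2"
      using K S(2) by (intro power_mono mult_left_mono) auto
    moreover have "t n \<ge> 0" unfolding t_def by (intro infsum_nonneg) simp
    ultimately have "(K * card (S n))\<^sup>2 * t n \<le> (K * m)\<^sup>2 * t n" by (rule mult_right_mono)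
    then show ?thesis unfolding in_l2_def using sq by (meson order_trans)
  qed
  show "\<forall>\<^sub>F n in sequentially. in_l2 (\<lambda>v. T (2*n) \<psi> v - U \<psi> v)"
    using dom by eventually_elim (use bound in blast)
  have "t \<longlonglongrightarrow> 0"
    unfolding t_def by (rule infsum_outside_tendsto_0[OF \<psi> C])
  then have "(\<lambda>n. (K * m)\<^sup>2 * t n) \<longlonglongrightarrow> 0"
    using tendsto_mult_right_zero by blast
  then show "(\<lambda>n. \<Sum>\<^sub>\<infinity>v. (norm (T (2*n) \<psi> v - U \<psi> v))\<^sup>2) \<longlonglongrightarrow> 0"
  proof (rule tendsto_sandwich[OF _ _ tendsto_const, rotated 2])
    show "\<forall>\<^sub>F n in sequentially. 0 \<le> (\<Sum>\<^sub>\<infinity>v. (norm (T (2*n) \<psi> v - U \<psi> v))\<^sup>2)"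
      by (intro always_eventually allI infsum_nonneg) simp
    show "\<forall>\<^sub>F n in sequentially. (\<Sum>\<^sub>\<infinity>v. (norm (T (2*n) \<psi> v - U \<psi> v))\<^sup>2) \<le> (K * m)\<^sup>2 * t n"
      using dom by eventually_elim (use bound in blast)
  qed
qed

section \<open>Lattice coordinates\<close>

lemma abs_mult_ge: "(j::int) \<le> \<bar>k\<bar> \<Longrightarrow> j * \<bar>m\<bar> \<le> \<bar>m * k\<bar>"
  by (simp add: abs_mult mult_right_mono mult.commute)

lemma wrapped_difference:
  fixes x y w a n R :: int
  assumes x: "- n \<le> x" "x < n" and y: "- n \<le> y" "y < n"
    and w: "\<bar>w\<bar> \<le> R" and R: "R < n" and eq: "x - y = w + 2 * n * a"
  shows "\<bar>a\<bar> \<le> 1" and "a \<noteq> 0 \<Longrightarrow> n - R \<le> x \<or> x < R - n"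
proof -
  have "2 * 2 * \<bar>n\<bar> \<le> \<bar>2 * n * a\<bar>" if "2 \<le> \<bar>a\<bar>"
    using abs_mult_ge[OF that, of "2 * n"] by (simp add: abs_mult)
  then show "\<bar>a\<bar> \<le> 1" using assms by linarith
  assume "a \<noteq> 0"
  then have "2 * \<bar>n\<bar> \<le> \<bar>2 * n * a\<bar>"
    using abs_mult_ge[of 1 a "2 * n"] by (simp add: abs_mult)
  then show "n - R \<le> x \<or> x < R - n" using assms by linarith
qed

lemma prod_diff_zero [simp]: "(x :: int \<times> int) - (0, 0) = x"
  by (cases x) simp

lemma prod_add_zero [simp]: "(x :: int \<times> int) + (0, 0) = x"
  by (cases x) simp

lemma lat_diff: "lat B u - lat B v = lat B (u - v)"
proof -
  have "vector [real_of_int (fst u), real_of_int (snd u)] - vector [real_of_int (fst v), real_of_int (snd v)]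
      = (vector [real_of_int (fst (u - v)), real_of_int (snd (u - v))] :: real^2)"
    by (simp add: vec_eq_iff forall_2 vector_2)
  then show ?thesis unfolding lat_def by (metis matrix_vector_mult_diff_distrib)
qed

lemma lat_origin: "lat B (0, 0) = 0"
proof -
  have "vector [0, 0] = (0 :: real^2)" by (simp add: vec_eq_iff forall_2 vector_2)
  then show ?thesis by (simp add: lat_def)
qed

lemma tdist_lat: "tdist B N (lat B u) (lat B v) = Inf {norm (lat B (u - v - (int N * a, int N * b))) | a b. True}"
  unfolding tdist_def by (simp add: lat_diff)

lemma trunc_even: "trunc (2 * n) = {- int n ..< int n} \<times> {- int n ..< int n}"
  unfolding trunc_def by simp

lemma invertible_coords_le_norm_lat:
  assumes "invertible B"
  obtains c where "c > 0"
    and "\<And>k. c * \<bar>real_of_int (fst k)\<bar> \<le> norm (lat B k) \<and> c * \<bar>real_of_int (snd k)\<bar> \<le> norm (lat B k)"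
proof -
  obtain Bi where inv: "Bi ** B = mat 1" using assms unfolding invertible_def by blast
  obtain K where K: "K > 0" "\<And>y. norm (Bi *v y) \<le> norm y * K"
    using bounded_linear.pos_bounded[OF matrix_vector_mul_bounded_linear[of Bi]] by blast
  show ?thesis
  proof (rule that[of "1 / K"])
    fix k :: "int \<times> int"
    let ?x = "vector [real_of_int (fst k), real_of_int (snd k)] :: real^2"
    have "?x = Bi *v lat B k" unfolding lat_def by (simp add: matrix_vector_mul_assoc inv)
    then have "norm ?x \<le> norm (lat B k) * K" using K(2) by metis
    moreover have "\<bar>real_of_int (fst k)\<bar> \<le> norm ?x" "\<bar>real_of_int (snd k)\<bar> \<le> norm ?x"
      using component_le_norm_cart[of ?x 1] component_le_norm_cart[of ?x 2] by simp_all
    ultimately show "1 / K * \<bar>real_of_int (fst k)\<bar> \<le> norm (lat B k) \<and> 1 / K * \<bar>real_of_int (snd k)\<bar> \<le> norm (lat B k)"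
      using K(1) by (simp add: field_simps)
  qed (use K in simp)
qed

section \<open>Kernels of compact support on the lattice\<close>

lemma compact_support_bounded_above:
  fixes f :: "real \<Rightarrow> real"
  assumes "compact (closure {x. f x \<noteq> 0})"
  obtains \<rho> where "\<rho> \<ge> 0" and "\<And>x. f x \<noteq> 0 \<Longrightarrow> x \<le> \<rho>\<^sup>2"
proof -
  obtain a where a: "\<And>x. x \<in> closure {x. f x \<noteq> 0} \<Longrightarrow> norm x \<le> a"
    using compact_imp_bounded[OF assms] unfolding bounded_iff by blast
  show ?thesis
  proof (rule that[of "max a 1"])
    fix x assume "f x \<noteq> 0"
    then have "x \<in> closure {x. f x \<noteq> 0}" by (intro closure_subset[THEN subsetD]) simp
    then have "x \<le> a" using a by fastforce
    also have "a \<le> 1 * max a 1" by simp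
    also have "\<dots> \<le> (max a 1)\<^sup>2"
      unfolding power2_eq_square by (rule mult_right_mono) auto
    finally show "x \<le> (max a 1)\<^sup>2" .
  qed simp
qed

locale lattice_kernel =
  fixes B :: "real^2^2" and f :: "real \<Rightarrow> real" and c \<rho> :: real
  assumes c_pos: "c > 0"
    and coords_le_norm: "\<And>k. c * \<bar>real_of_int (fst k)\<bar> \<le> norm (lat B k) \<and> c * \<bar>real_of_int (snd k)\<bar> \<le> norm (lat B k)"
    and \<rho>_nonneg: "\<rho> \<ge> 0"
    and f_nonneg: "\<And>x. f x \<ge> 0"
    and f_support: "\<And>x. f x \<noteq> 0 \<Longrightarrow> x \<le> \<rho>\<^sup>2"
begin

definition radius :: int where "radius = \<lceil>(\<rho> + 1) / c\<rceil>"

definition box :: "(int \<times> int) set" where "box = {-radius..radius} \<times> {-radius..radius}"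

definition kernel_max :: real where "kernel_max = Max ((\<lambda>d. f ((norm (lat B d))\<^sup>2)) ` box)"

lemma radius_pos: "radius > 0"
  using c_pos \<rho>_nonneg by (simp add: radius_def)

lemma finite_box: "finite box"
  by (simp add: box_def)

lemma origin_in_box: "(0, 0) \<in> box"
  using radius_pos by (simp add: box_def)

lemma norm_lat_lt_imp_in_box:
  assumes "norm (lat B w) < \<rho> + 1"
  shows "w \<in> box"
proof -
  have "c * \<bar>real_of_int (fst w)\<bar> < \<rho> + 1" "c * \<bar>real_of_int (snd w)\<bar> < \<rho> + 1"
    using coords_le_norm[of w] assms by linarith+
  then have "\<bar>real_of_int (fst w)\<bar> < (\<rho> + 1) / c" "\<bar>real_of_int (snd w)\<bar> < (\<rho> + 1) / c"
    using c_pos by (simp_all add: field_simps)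
  then have "\<bar>fst w\<bar> \<le> radius" "\<bar>snd w\<bar> \<le> radius"
    unfolding radius_def by linarith+
  then show ?thesis unfolding box_def by (cases w) auto
qed

lemma kernel_nonzero_imp_norm_le:
  "f (r\<^sup>2) \<noteq> 0 \<Longrightarrow> r \<le> \<rho>"
  using f_support \<rho>_nonneg power2_le_imp_le by blast

lemma kernel_nonzero_imp_in_box:
  assumes "f ((norm (lat B d))\<^sup>2) \<noteq> 0"
  shows "d \<in> box"
proof -
  have "norm (lat B d) \<le> \<rho>" using assms by (rule kernel_nonzero_imp_norm_le)
  then show ?thesis by (intro norm_lat_lt_imp_in_box) simp
qed

lemma kernel_max_nonneg: "kernel_max \<ge> 0"
proof -
  have "f ((norm (lat B (0, 0)))\<^sup>2) \<le> kernel_max"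
    unfolding kernel_max_def using finite_box origin_in_box by (intro Max_ge) auto
  then show ?thesis using f_nonneg order_trans by blast
qed

lemma kernel_le_max: "f ((norm (lat B d))\<^sup>2) \<le> kernel_max"
proof (cases "d \<in> box")
  case True then show ?thesis unfolding kernel_max_def using finite_box by (intro Max_ge) auto
next
  case False then show ?thesis by (metis kernel_nonzero_imp_in_box kernel_max_nonneg)
qed

definition torus_norms :: "nat \<Rightarrow> int \<times> int \<Rightarrow> real set" where
  "torus_norms N d = {norm (lat B (d - (int N * a, int N * b))) | a b. True}"

lemma tdist_eq_Inf_torus_norms: "tdist B N (lat B u) (lat B v) = Inf (torus_norms N (u - v))"
  unfolding tdist_lat torus_norms_def ..

lemma torus_kernel_nonzero_imp_rep_in_box:
  assumes "f ((Inf (torus_norms N d))\<^sup>2) \<noteq> 0"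
  obtains a b where "d - (int N * a, int N * b) \<in> box"
    and "norm (lat B (d - (int N * a, int N * b))) < \<rho> + 1"
proof -
  have ne: "torus_norms N d \<noteq> {}" and bdd: "bdd_below (torus_norms N d)"
    unfolding torus_norms_def bdd_below_def by (blast, auto intro: exI[of _ 0])
  have "Inf (torus_norms N d) < \<rho> + 1"
    using kernel_nonzero_imp_norm_le[OF assms] by linarith
  then obtain x where "x \<in> torus_norms N d" "x < \<rho> + 1"
    using cInf_less_iff[OF ne bdd] by blast
  then show ?thesis
    using that norm_lat_lt_imp_in_box unfolding torus_norms_def by blast
qed

lemma other_representative_far:
  assumes "d - (int N * a, int N * b) \<in> box" and "(a', b') \<noteq> (a, b)"
  shows "int N - radius \<le> \<bar>fst (d - (int N * a', int N * b'))\<bar>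
       \<or> int N - radius \<le> \<bar>snd (d - (int N * a', int N * b'))\<bar>"
proof -
  let ?w = "d - (int N * a, int N * b)"
  have w: "\<bar>fst ?w\<bar> \<le> radius" "\<bar>snd ?w\<bar> \<le> radius"
    using assms(1) unfolding box_def mem_Times_iff by auto
  have shift: "fst (d - (int N * a', int N * b')) = fst ?w - int N * (a' - a)"
    "snd (d - (int N * a', int N * b')) = snd ?w - int N * (b' - b)"
    by (simp_all add: algebra_simps)
  consider "a' - a \<noteq> 0" | "b' - b \<noteq> 0" using assms(2) by auto
  then show ?thesis
  proof cases
    case 1 then show ?thesis
      using abs_mult_ge[of 1 "a' - a" "int N"] w shift by linarith
  next
    case 2 then show ?thesis
      using abs_mult_ge[of 1 "b' - b" "int N"] w shift by linarith
  qed
qed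

lemma Inf_torus_norms_eq:
  assumes N: "\<rho> + 1 \<le> c * (real N - real_of_int radius)"
    and box: "d - (int N * a, int N * b) \<in> box"
    and small: "norm (lat B (d - (int N * a, int N * b))) \<le> \<rho> + 1"
  shows "Inf (torus_norms N d) = norm (lat B (d - (int N * a, int N * b)))"
proof (rule cInf_eq_minimum)
  show "norm (lat B (d - (int N * a, int N * b))) \<in> torus_norms N d"
    unfolding torus_norms_def by blast
  fix x assume "x \<in> torus_norms N d"
  then obtain a' b' where x: "x = norm (lat B (d - (int N * a', int N * b')))"
    unfolding torus_norms_def by blast
  show "norm (lat B (d - (int N * a, int N * b))) \<le> x"
  proof (cases "(a', b') = (a, b)")
    case True then show ?thesis using x by simp
  next
    case False
    let ?v = "d - (int N * a', int N * b')"
    from other_representative_far[OF box False]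
    have "real N - real_of_int radius \<le> \<bar>real_of_int (fst ?v)\<bar>
        \<or> real N - real_of_int radius \<le> \<bar>real_of_int (snd ?v)\<bar>"
      by linarith
    then have "c * (real N - real_of_int radius) \<le> norm (lat B ?v)"
      using coords_le_norm[of ?v] c_pos by (meson mult_left_mono less_imp_le order_trans)
    then show ?thesis using x small N by linarith
  qed
qed

lemma torus_kernel_le_max:
  assumes "\<rho> + 1 \<le> c * (real N - real_of_int radius)"
  shows "f ((Inf (torus_norms N d))\<^sup>2) \<le> kernel_max"
proof (cases "f ((Inf (torus_norms N d))\<^sup>2) = 0")
  case True then show ?thesis using kernel_max_nonneg by simp
next
  case False
  then obtain a b where "d - (int N * a, int N * b) \<in> box"
    "norm (lat B (d - (int N * a, int N * b))) < \<rho> + 1"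
    by (rule torus_kernel_nonzero_imp_rep_in_box)
  with Inf_torus_norms_eq[OF assms] kernel_le_max show ?thesis by simp
qed


definition inner :: "nat \<Rightarrow> (int \<times> int) set" where
  "inner n = {- int n + radius ..< int n - radius} \<times> {- int n + radius ..< int n - radius}"

definition core :: "nat \<Rightarrow> (int \<times> int) set" where
  "core n = {- int n + 2 * radius ..< int n - 2 * radius} \<times> {- int n + 2 * radius ..< int n - 2 * radius}"

text \<open>The displacements u - v through which the torus kernel on the truncation of side 2 n
  can couple v to u: the support box, shifted by at most one period in each direction.\<close>
definition reach :: "nat \<Rightarrow> (int \<times> int) set" where
  "reach n = (\<lambda>(w, a, b). w + (int (2 * n) * a, int (2 * n) * b)) ` (box \<times> {-1..1} \<times> {-1..1})"

definition boundary_mass :: "nat \<Rightarrow> (int \<times> int \<Rightarrow> complex) \<Rightarrow> int \<times> int \<Rightarrow> real" where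
  "boundary_mass n \<psi> v = (\<Sum>s\<in>reach n. norm (vanish_on (core n) \<psi> (v + s)))"

text \<open>For large n the support box lies deep inside the truncation, and every periodic
  representative other than the one in the box is longer than rho + 1.\<close>
definition large :: "nat \<Rightarrow> bool" where
  "large n \<longleftrightarrow> radius < int n \<and> \<rho> + 1 \<le> c * (real n - real_of_int radius)"

lemma eventually_large: "\<forall>\<^sub>F n in sequentially. large n"
proof -
  obtain n0 :: nat where n0: "(\<rho> + 1) / c + real_of_int radius + 1 \<le> real n0"
    using real_arch_simple by blast
  have "large n" if "n0 \<le> n" for n
  proof -
    have n: "(\<rho> + 1) / c + real_of_int radius + 1 \<le> real n"
      using n0 that by (meson order_trans of_nat_le_iff)
    moreover have "(\<rho> + 1) / c \<ge> 0" using c_pos \<rho>_nonneg by simp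
    ultimately have "radius < int n" by linarith
    moreover have "\<rho> + 1 \<le> c * (real n - real_of_int radius)"
      using n c_pos by (simp add: field_simps)
    ultimately show ?thesis unfolding large_def ..
  qed
  then show ?thesis unfolding eventually_sequentially by blast
qed

lemma large_imp_period_bound:
  assumes "large n"
  shows "\<rho> + 1 \<le> c * (real (2 * n) - real_of_int radius)"
proof -
  have "c * (real n - real_of_int radius) \<le> c * (real (2 * n) - real_of_int radius)"
    using c_pos by (intro mult_left_mono) auto
  then show ?thesis using assms unfolding large_def by linarith
qed

lemma finite_reach: "finite (reach n)"
  by (simp add: reach_def finite_box)

lemma card_reach: "card (reach n) \<le> 9 * card box"
proof -
  have "card (reach n) \<le> card (box \<times> {-1..1::int} \<times> {-1..1::int})"
    unfolding reach_def by (rule card_image_le) (simp add: finite_box)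
  then show ?thesis by (simp add: card_cartesian_product)
qed

lemma box_subset_reach: "box \<subseteq> reach n"
proof
  fix w assume "w \<in> box"
  then have "(w, 0, 0) \<in> box \<times> {-1..1::int} \<times> {-1..1::int}" by simp
  then show "w \<in> reach n" unfolding reach_def by (rule image_eqI[rotated]) simp
qed

lemma norm_le_boundary_mass:
  assumes "v \<notin> core n"
  shows "norm (\<psi> v) \<le> boundary_mass n \<psi> v"
proof -
  have "norm (\<psi> v) = norm (vanish_on (core n) \<psi> (v + (0, 0)))"
    using assms by (simp add: vanish_on_def)
  also have "\<dots> \<le> boundary_mass n \<psi> v"
    unfolding boundary_mass_def using box_subset_reach origin_in_box finite_reach
    by (intro member_le_sum) auto
  finally show ?thesis .
qed

lemma box_shift_not_in_core: "v \<notin> inner n \<Longrightarrow> u - v \<in> box \<Longrightarrow> u \<notin> core n"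
  unfolding inner_def core_def box_def by (cases u; cases v) auto

lemma kernel_vanishes_outside_trunc:
  assumes "v \<in> inner n" and "u \<notin> trunc (2 * n)"
  shows "f ((norm (lat B u - lat B v))\<^sup>2) = 0"
proof (rule ccontr)
  assume "f ((norm (lat B u - lat B v))\<^sup>2) \<noteq> 0"
  then have "u - v \<in> box" unfolding lat_diff by (rule kernel_nonzero_imp_in_box)
  then show False
    using assms radius_pos unfolding inner_def box_def trunc_even by (cases u; cases v) auto
qed

lemma torus_kernel_eq_kernel:
  assumes n: "large n" and v: "v \<in> inner n" and u: "u \<in> trunc (2 * n)"
  shows "f ((tdist B (2 * n) (lat B u) (lat B v))\<^sup>2) = f ((norm (lat B u - lat B v))\<^sup>2)"
proof (cases "f ((tdist B (2 * n) (lat B u) (lat B v))\<^sup>2) = 0 \<and> f ((norm (lat B u - lat B v))\<^sup>2) = 0")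
  case True then show ?thesis by simp
next
  case False
  have "u - v \<in> box \<and> norm (lat B (u - v)) < \<rho> + 1"
  proof (cases "f ((norm (lat B u - lat B v))\<^sup>2) = 0")
    case True
    with False obtain a b where ab: "u - v - (int (2 * n) * a, int (2 * n) * b) \<in> box"
      "norm (lat B (u - v - (int (2 * n) * a, int (2 * n) * b))) < \<rho> + 1"
      unfolding tdist_eq_Inf_torus_norms by (auto elim: torus_kernel_nonzero_imp_rep_in_box)
    have "\<bar>int (2 * n) * a\<bar> < int (2 * n)" "\<bar>int (2 * n) * b\<bar> < int (2 * n)"
      using ab(1) v u unfolding box_def inner_def trunc_even by (cases u; cases v; auto)+
    then have "a = 0" "b = 0"
      using abs_mult_ge[of 1 a "int (2 * n)"] abs_mult_ge[of 1 b "int (2 * n)"] by fastforce+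
    then show ?thesis using ab by simp
  next
    case False
    then have "norm (lat B (u - v)) \<le> \<rho>"
      unfolding lat_diff by (rule kernel_nonzero_imp_norm_le)
    then show ?thesis by (auto intro: norm_lat_lt_imp_in_box)
  qed
  then have "Inf (torus_norms (2 * n) (u - v)) = norm (lat B (u - v))"
    using Inf_torus_norms_eq[OF large_imp_period_bound[OF n], of "u - v" 0 0] by simp
  then show ?thesis by (simp add: tdist_eq_Inf_torus_norms lat_diff)
qed

lemma torus_kernel_nonzero_at_boundary:
  assumes n: "radius < int n" and v: "v \<in> trunc (2 * n)" "v \<notin> inner n" and u: "u \<in> trunc (2 * n)"
    and nz: "f ((tdist B (2 * n) (lat B u) (lat B v))\<^sup>2) \<noteq> 0"
  shows "u - v \<in> reach n" and "u \<notin> core n"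
proof -
  obtain a b where w: "u - v - (int (2 * n) * a, int (2 * n) * b) \<in> box"
    using nz unfolding tdist_eq_Inf_torus_norms by (auto elim: torus_kernel_nonzero_imp_rep_in_box)
  define w where "w = u - v - (int (2 * n) * a, int (2 * n) * b)"
  have wb: "\<bar>fst w\<bar> \<le> radius" "\<bar>snd w\<bar> \<le> radius"
    using w unfolding w_def box_def mem_Times_iff by auto
  have eq: "fst u - fst v = fst w + 2 * int n * a" "snd u - snd v = snd w + 2 * int n * b"
    unfolding w_def by auto
  have ub: "- int n \<le> fst u" "fst u < int n" "- int n \<le> snd u" "snd u < int n"
    and vb: "- int n \<le> fst v" "fst v < int n" "- int n \<le> snd v" "snd v < int n"
    using u v unfolding trunc_even mem_Times_iff by auto
  note fst_wrap = wrapped_difference[OF ub(1,2) vb(1,2) wb(1) n eq(1)]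
    and snd_wrap = wrapped_difference[OF ub(3,4) vb(3,4) wb(2) n eq(2)]
  have "(w, a, b) \<in> box \<times> {-1..1} \<times> {-1..1}"
    using w fst_wrap(1) snd_wrap(1) unfolding w_def by auto
  moreover have "u - v = w + (int (2 * n) * a, int (2 * n) * b)" unfolding w_def by simp
  ultimately show "u - v \<in> reach n" unfolding reach_def by (force intro: image_eqI[where x = "(w, a, b)"])
  show "u \<notin> core n"
  proof (cases "a = 0 \<and> b = 0")
    case True then show ?thesis using box_shift_not_in_core[OF v(2)] w by simp
  next
    case False then show ?thesis
      using fst_wrap(2) snd_wrap(2) radius_pos unfolding core_def mem_Times_iff by auto
  qed
qed


lemma Wf_eq_sum_box:
  "Wf f B \<psi> v = (\<Sum>u\<in>(\<lambda>w. v + w) ` box - {v}. of_real (f ((norm (lat B u - lat B v))\<^sup>2)) * \<psi> u)"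
proof -
  have "Wf f B \<psi> v = (\<Sum>\<^sub>\<infinity>u\<in>(\<lambda>w. v + w) ` box - {v}. of_real (f ((norm (lat B u - lat B v))\<^sup>2)) * \<psi> u)"
    unfolding Wf_def
  proof (rule infsum_cong_neutral)
    fix u assume u: "u \<in> (UNIV - {v}) - ((\<lambda>w. v + w) ` box - {v})"
    have "f ((norm (lat B u - lat B v))\<^sup>2) = 0"
    proof (rule ccontr)
      assume "f ((norm (lat B u - lat B v))\<^sup>2) \<noteq> 0"
      then have "u - v \<in> box" unfolding lat_diff by (rule kernel_nonzero_imp_in_box)
      then have "u \<in> (\<lambda>w. v + w) ` box" by (rule image_eqI[rotated]) simp
      then show False using u by blast
    qed
    then show "of_real (f ((norm (lat B u - lat B v))\<^sup>2)) * \<psi> u = 0" by simp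
  qed auto
  then show ?thesis using finite_box by simp
qed

lemma Wf_eq_WfN_inner:
  assumes n: "large n" and v: "v \<in> inner n"
  shows "Wf f B \<psi> v = WfN f B (2 * n) \<psi> v"
proof -
  have vt: "v \<in> trunc (2 * n)" using v radius_pos unfolding inner_def trunc_even by auto
  have "Wf f B \<psi> v = (\<Sum>\<^sub>\<infinity>u\<in>trunc (2 * n) - {v}. of_real (f ((norm (lat B u - lat B v))\<^sup>2)) * \<psi> u)"
    unfolding Wf_def by (rule infsum_cong_neutral) (use kernel_vanishes_outside_trunc[OF v] in auto)
  also have "\<dots> = (\<Sum>u\<in>trunc (2 * n) - {v}. of_real (f ((norm (lat B u - lat B v))\<^sup>2)) * \<psi> u)"
    by (simp add: trunc_def)
  also have "\<dots> = WfN f B (2 * n) \<psi> v"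
    unfolding WfN_def using vt torus_kernel_eq_kernel[OF n v] by (auto intro!: sum.cong)
  finally show ?thesis .
qed

lemma norm_Wf_le:
  assumes v: "v \<notin> inner n"
  shows "norm (Wf f B \<psi> v) \<le> kernel_max * boundary_mass n \<psi> v"
proof -
  let ?V = "(\<lambda>w. v + w) ` box - {v}"
  have "norm (Wf f B \<psi> v) \<le> (\<Sum>u\<in>?V. norm (of_real (f ((norm (lat B u - lat B v))\<^sup>2)) * \<psi> u))"
    unfolding Wf_eq_sum_box by (rule norm_sum)
  also have "\<dots> \<le> (\<Sum>u\<in>?V. kernel_max * norm (vanish_on (core n) \<psi> u))"
  proof (rule sum_mono)
    fix u assume "u \<in> ?V"
    show "norm (of_real (f ((norm (lat B u - lat B v))\<^sup>2)) * \<psi> u) \<le> kernel_max * norm (vanish_on (core n) \<psi> u)"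
    proof (cases "f ((norm (lat B u - lat B v))\<^sup>2) = 0")
      case True then show ?thesis using kernel_max_nonneg by simp
    next
      case False
      then have "u - v \<in> box" unfolding lat_diff by (rule kernel_nonzero_imp_in_box)
      then have "vanish_on (core n) \<psi> u = \<psi> u"
        using box_shift_not_in_core[OF v] by (simp add: vanish_on_def)
      moreover have "f ((norm (lat B u - lat B v))\<^sup>2) \<le> kernel_max"
        using kernel_le_max[of "u - v"] by (simp add: lat_diff)
      ultimately show ?thesis using f_nonneg by (simp add: norm_mult mult_right_mono)
    qed
  qed
  also have "\<dots> \<le> (\<Sum>u\<in>(\<lambda>w. v + w) ` box. kernel_max * norm (vanish_on (core n) \<psi> u))"
    by (rule sum_mono2) (use finite_box kernel_max_nonneg in auto)
  also have "\<dots> = (\<Sum>w\<in>box. kernel_max * norm (vanish_on (core n) \<psi> (v + w)))"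
    by (subst sum.reindex) (auto simp: inj_on_def)
  also have "\<dots> \<le> (\<Sum>s\<in>reach n. kernel_max * norm (vanish_on (core n) \<psi> (v + s)))"
    by (rule sum_mono2) (use finite_reach box_subset_reach kernel_max_nonneg in auto)
  finally show ?thesis by (simp add: boundary_mass_def sum_distrib_left)
qed

lemma norm_WfN_le:
  assumes n: "large n" and v: "v \<notin> inner n"
  shows "norm (WfN f B (2 * n) \<psi> v) \<le> kernel_max * boundary_mass n \<psi> v"
proof (cases "v \<in> trunc (2 * n)")
  case False then show ?thesis
    using kernel_max_nonneg by (simp add: WfN_def boundary_mass_def sum_nonneg)
next
  case vt: True
  let ?T = "trunc (2 * n) - {v}"
  let ?k = "\<lambda>u. f ((tdist B (2 * n) (lat B u) (lat B v))\<^sup>2)"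
  have "norm (WfN f B (2 * n) \<psi> v) \<le> (\<Sum>u\<in>?T. norm (of_real (?k u) * \<psi> u))"
    unfolding WfN_def using vt by (simp add: norm_sum)
  also have "\<dots> \<le> (\<Sum>u\<in>?T. if u - v \<in> reach n then kernel_max * norm (vanish_on (core n) \<psi> u) else 0)"
  proof (rule sum_mono)
    fix u assume u: "u \<in> ?T"
    show "norm (of_real (?k u) * \<psi> u) \<le> (if u - v \<in> reach n then kernel_max * norm (vanish_on (core n) \<psi> u) else 0)"
    proof (cases "?k u = 0")
      case True then show ?thesis using kernel_max_nonneg by simp
    next
      case False
      have n': "radius < int n" using n by (simp add: large_def)
      note boundary = torus_kernel_nonzero_at_boundary[OF n' vt v _ False]
      have "vanish_on (core n) \<psi> u = \<psi> u" using boundary(2) u by (simp add: vanish_on_def)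
      moreover have "?k u \<le> kernel_max"
        using torus_kernel_le_max[OF large_imp_period_bound[OF n]] by (simp add: tdist_eq_Inf_torus_norms)
      ultimately show ?thesis using f_nonneg boundary(1) u by (simp add: norm_mult mult_right_mono)
    qed
  qed
  also have "\<dots> = (\<Sum>u\<in>{u \<in> ?T. u - v \<in> reach n}. kernel_max * norm (vanish_on (core n) \<psi> u))"
    by (rule sum.inter_filter[symmetric]) (simp add: trunc_def)
  also have "\<dots> \<le> (\<Sum>u\<in>(\<lambda>s. v + s) ` reach n. kernel_max * norm (vanish_on (core n) \<psi> u))"
    by (rule sum_mono2) (use finite_reach kernel_max_nonneg in \<open>auto intro: image_eqI[rotated]\<close>)
  also have "\<dots> = (\<Sum>s\<in>reach n. kernel_max * norm (vanish_on (core n) \<psi> (v + s)))"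
    by (subst sum.reindex) (auto simp: inj_on_def)
  finally show ?thesis by (simp add: boundary_mass_def sum_distrib_left)
qed

lemma norm_WfN_minus_Wf_le:
  assumes n: "large n"
  shows "norm (WfN f B (2 * n) \<psi> v - Wf f B \<psi> v) \<le> 2 * kernel_max * boundary_mass n \<psi> v"
proof (cases "v \<in> inner n")
  case True then show ?thesis
    using Wf_eq_WfN_inner[OF n] kernel_max_nonneg by (simp add: boundary_mass_def sum_nonneg)
next
  case False
  have "norm (WfN f B (2 * n) \<psi> v - Wf f B \<psi> v) \<le> norm (WfN f B (2 * n) \<psi> v) + norm (Wf f B \<psi> v)"
    by (rule norm_triangle_ineq4)
  also have "\<dots> \<le> kernel_max * boundary_mass n \<psi> v + kernel_max * boundary_mass n \<psi> v"
    by (intro add_mono norm_WfN_le[OF n False] norm_Wf_le[OF False])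
  finally show ?thesis by simp
qed

lemma LfN_diagonal_eq:
  assumes n: "large n"
  shows "(\<Sum>u\<in>trunc (2 * n) - {(0, 0)}. f ((tdist B (2 * n) (lat B u) (lat B (0, 0)))\<^sup>2))
       = (\<Sum>\<^sub>\<infinity>u\<in>UNIV - {(0, 0)}. f ((norm (lat B u))\<^sup>2))"
proof -
  have origin: "(0, 0) \<in> inner n" using n radius_pos unfolding inner_def large_def by auto
  have "(\<Sum>\<^sub>\<infinity>u\<in>UNIV - {(0, 0)}. f ((norm (lat B u))\<^sup>2))
      = (\<Sum>\<^sub>\<infinity>u\<in>trunc (2 * n) - {(0, 0)}. f ((norm (lat B u - lat B (0, 0)))\<^sup>2))"
    by (rule infsum_cong_neutral) (use kernel_vanishes_outside_trunc[OF origin] lat_origin in auto)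
  also have "\<dots> = (\<Sum>u\<in>trunc (2 * n) - {(0, 0)}. f ((tdist B (2 * n) (lat B u) (lat B (0, 0)))\<^sup>2))"
    using torus_kernel_eq_kernel[OF n origin] by (auto simp: trunc_def intro!: sum.cong)
  finally show ?thesis by simp
qed

lemma norm_LfN_minus_Lf_le:
  assumes n: "large n"
  shows "norm (LfN f B (2 * n) \<psi> v - Lf f B \<psi> v)
     \<le> (2 * kernel_max + \<bar>\<Sum>\<^sub>\<infinity>u\<in>UNIV - {(0, 0)}. f ((norm (lat B u))\<^sup>2)\<bar>) * boundary_mass n \<psi> v"
    (is "_ \<le> (_ + \<bar>?c\<bar>) * ?m")
proof -
  have W: "norm (WfN f B (2 * n) \<psi> v - Wf f B \<psi> v) \<le> 2 * kernel_max * ?m"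
    by (rule norm_WfN_minus_Wf_le[OF n])
  have m: "?m \<ge> 0" by (simp add: boundary_mass_def sum_nonneg)
  show ?thesis
  proof (cases "v \<in> trunc (2 * n)")
    case True
    then have "LfN f B (2 * n) \<psi> v - Lf f B \<psi> v = - (WfN f B (2 * n) \<psi> v - Wf f B \<psi> v)"
      unfolding LfN_def Lf_def using LfN_diagonal_eq[OF n] by simp
    then have "norm (LfN f B (2 * n) \<psi> v - Lf f B \<psi> v) = norm (WfN f B (2 * n) \<psi> v - Wf f B \<psi> v)"
      by (simp add: norm_minus_commute)
    also have "\<dots> \<le> (2 * kernel_max + \<bar>?c\<bar>) * ?m"
      using W mult_right_mono[OF _ m, of "2 * kernel_max" "2 * kernel_max + \<bar>?c\<bar>"] by simp
    finally show ?thesis .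
  next
    case False
    then have "v \<notin> core n" using radius_pos unfolding core_def trunc_even by auto
    then have \<psi>: "norm (\<psi> v) \<le> ?m" by (rule norm_le_boundary_mass)
    have "WfN f B (2 * n) \<psi> v = 0" using False by (simp add: WfN_def)
    then have "LfN f B (2 * n) \<psi> v - Lf f B \<psi> v = - (of_real ?c * \<psi> v + (WfN f B (2 * n) \<psi> v - Wf f B \<psi> v))"
      unfolding LfN_def Lf_def using False by simp
    then have "norm (LfN f B (2 * n) \<psi> v - Lf f B \<psi> v) = norm (of_real ?c * \<psi> v + (WfN f B (2 * n) \<psi> v - Wf f B \<psi> v))"
      by (simp only: norm_minus_cancel)
    also have "\<dots> \<le> norm (of_real ?c * \<psi> v) + norm (WfN f B (2 * n) \<psi> v - Wf f B \<psi> v)"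
      by (rule norm_triangle_ineq)
    also have "\<dots> \<le> \<bar>?c\<bar> * ?m + 2 * kernel_max * ?m"
      using \<psi> W by (intro add_mono) (simp_all add: norm_mult mult_left_mono)
    finally show ?thesis by (simp add: distrib_right)
  qed
qed

lemma Wf_strong_conv: "strong_conv_even (\<lambda>N. WfN f B N) (Wf f B)"
proof (rule strong_conv_evenI)
  show "\<forall>\<^sub>F n in sequentially. \<forall>\<psi> v. norm (WfN f B (2 * n) \<psi> v - Wf f B \<psi> v)
      \<le> 2 * kernel_max * (\<Sum>s\<in>reach n. norm (vanish_on (core n) \<psi> (v + s)))"
    using eventually_large by eventually_elim (metis boundary_mass_def norm_WfN_minus_Wf_le)
  show "filterlim core (finite_subsets_at_top UNIV) sequentially"
    unfolding core_def by (rule centered_squares_tendsto_finite_subsets)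
qed (use kernel_max_nonneg finite_reach card_reach in \<open>auto simp: core_def\<close>)

lemma Lf_strong_conv: "strong_conv_even (\<lambda>N. LfN f B N) (Lf f B)"
proof (rule strong_conv_evenI)
  show "\<forall>\<^sub>F n in sequentially. \<forall>\<psi> v. norm (LfN f B (2 * n) \<psi> v - Lf f B \<psi> v)
      \<le> (2 * kernel_max + \<bar>\<Sum>\<^sub>\<infinity>u\<in>UNIV - {(0, 0)}. f ((norm (lat B u))\<^sup>2)\<bar>)
         * (\<Sum>s\<in>reach n. norm (vanish_on (core n) \<psi> (v + s)))"
    using eventually_large by eventually_elim (metis boundary_mass_def norm_LfN_minus_Lf_le)
  show "filterlim core (finite_subsets_at_top UNIV) sequentially"
    unfolding core_def by (rule centered_squares_tendsto_finite_subsets)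
qed (use kernel_max_nonneg finite_reach card_reach in \<open>auto simp: core_def\<close>)

end

theorem proposition4p4:
  fixes B :: "real^2^2" and f :: "real \<Rightarrow> real"
  assumes "invertible B"
    and "\<And>x. f x \<ge> 0"
    and "compact (closure {x. f x \<noteq> 0})"
    and "f 0 = 0"
    and "(\<lambda>u. f ((norm (lat B u))\<^sup>2)) summable_on (UNIV - {(0,0)})"
  shows "strong_conv_even (\<lambda>N. WfN f B N) (Wf f B) \<and> strong_conv_even (\<lambda>N. LfN f B N) (Lf f B)"
proof -
  obtain c where "c > 0"
    and "\<And>k. c * \<bar>real_of_int (fst k)\<bar> \<le> norm (lat B k) \<and> c * \<bar>real_of_int (snd k)\<bar> \<le> norm (lat B k)"
    using invertible_coords_le_norm_lat[OF assms(1)] by blast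
  moreover obtain \<rho> where "\<rho> \<ge> 0" and "\<And>x. f x \<noteq> 0 \<Longrightarrow> x \<le> \<rho>\<^sup>2"
    using compact_support_bounded_above[OF assms(3)] by blast
  ultimately interpret lattice_kernel B f c \<rho>
    using assms(2) by unfold_locales auto
  show ?thesis using Wf_strong_conv Lf_strong_conv ..
qed

end
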